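(* Let $R$ be a real $d\times d$ matrix all of whose eigenvalues $\lambda$ satisfy $|\lambda|>1$, let $B\subset\mathbb{R}^d$ be finite with $\#B\ge2$, and let $\tau_b(x)=R^{-1}(x+b)$ for $b\in B$, so $\tau_b^{-1}(y)=Ry-b$. Then for every $x\in\mathbb{R}^d$ and $n\in\mathbb{N}$, the set $\{\tau_{\omega_n}^{-1}\cdots\tau_{\omega_1}^{-1}x:\omega_1,\dots,\omega_n\in B\}$ has at least $n$ elements, and the set $\{\tau_{\omega_n}\cdots\tau_{\omega_1}x:\omega_1,\dots,\omega_n\in B\}$ has at least $n$ elements. *)

theory Defs
  imports "HOL-Analysis.Analysis"
begin

definition cmat :: "real^'n^'m \<Rightarrow> complex^'n^'m" where
  "cmat R = (\<chi> i j. complex_of_real (R $ i $ j))"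

definition is_eigenvalue :: "real^'n^'n \<Rightarrow> complex \<Rightarrow> bool" where
  "is_eigenvalue R c \<longleftrightarrow> (\<exists>v. v \<noteq> 0 \<and> cmat R *v v = c *s v)"

definition tau :: "real^'n^'n \<Rightarrow> real^'n \<Rightarrow> real^'n \<Rightarrow> real^'n" where
  "tau R b x = matrix_inv R *v (x + b)"

definition tau_inv :: "real^'n^'n \<Rightarrow> real^'n \<Rightarrow> real^'n \<Rightarrow> real^'n" where
  "tau_inv R b y = R *v y - b"

end

theory Submission
  imports Defs
begin

text \<open>Both \<open>\<tau>\<^sub>b\<close> and \<open>\<tau>\<^sub>b\<^sup>-\<^sup>1\<close> are affine maps \<open>y \<mapsto> L y + c\<^sub>b\<close> with a common injective
  linear part \<open>L\<close> and translation parts \<open>c\<^sub>b\<close> that differ for distinct \<open>b\<close>. If \<open>S\<close> is the set of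
  points reached after \<open>n\<close> steps, then after \<open>n + 1\<close> steps we reach in particular \<open>L S + c\<^sub>b\<^sub>1 \<union> L S + c\<^sub>b\<^sub>2\<close>.
  Both sets have \<open>#S\<close> elements and they are different, because a finite nonempty set is not
  invariant under a nonzero translation \<open>t\<close> (consider a point minimising \<open>\<langle>-, t\<rangle>\<close>). So the number
  of reachable points grows strictly with \<open>n\<close>. The eigenvalue hypothesis only serves to make \<open>R\<close>
  invertible.\<close>

lemma translation_invariant_finite_set_imp_zero:
  fixes A :: "'a::real_inner set"
  assumes "finite A" "A \<noteq> {}" "(\<lambda>a. a + t) ` A = A"
  shows "t = 0"
proof -
  define a where "a = arg_min_on (\<lambda>b. b \<bullet> t) A"
  have "a \<in> (\<lambda>a. a + t) ` A"
    unfolding a_def assms(3) using arg_min_if_finite(1)[OF assms(1,2)] .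
  then obtain b where "b \<in> A" "a = b + t" by blast
  moreover have "a \<bullet> t \<le> b \<bullet> t"
    unfolding a_def using arg_min_least[OF assms(1,2) \<open>b \<in> A\<close>] .
  ultimately have "t \<bullet> t \<le> 0" by (simp add: inner_add_left)
  then show ?thesis using inner_gt_zero_iff[of t] by linarith
qed

definition word_orbit :: "('b \<Rightarrow> 'a \<Rightarrow> 'a) \<Rightarrow> 'b set \<Rightarrow> 'a \<Rightarrow> nat \<Rightarrow> 'a set" where
  "word_orbit F B x n = {foldl (\<lambda>y b. F b y) x \<omega> | \<omega>. length \<omega> = n \<and> set \<omega> \<subseteq> B}"

lemma word_orbit_0 [simp]: "word_orbit F B x 0 = {x}"
  by (auto simp: word_orbit_def)

lemma word_orbit_Suc: "word_orbit F B x (Suc n) = (\<Union>b\<in>B. F b ` word_orbit F B x n)"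
proof safe
  fix z assume "z \<in> word_orbit F B x (Suc n)"
  then obtain \<omega> b where "length \<omega> = n" "set \<omega> \<subseteq> B" "b \<in> B" "z = F b (foldl (\<lambda>y b. F b y) x \<omega>)"
    unfolding word_orbit_def by (auto simp: length_Suc_conv_rev)
  then show "z \<in> (\<Union>b\<in>B. F b ` word_orbit F B x n)"
    unfolding word_orbit_def by blast
next
  fix b z assume "b \<in> B" "z \<in> word_orbit F B x n"
  then obtain \<omega> where "length \<omega> = n" "set \<omega> \<subseteq> B" "z = foldl (\<lambda>y b. F b y) x \<omega>"
    unfolding word_orbit_def by blast
  with \<open>b \<in> B\<close> show "F b z \<in> word_orbit F B x (Suc n)"
    unfolding word_orbit_def by (intro CollectI exI[of _ "\<omega> @ [b]"]) auto
qed

lemma finite_word_orbit: "finite B \<Longrightarrow> finite (word_orbit F B x n)"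
  by (induction n) (simp_all add: word_orbit_Suc)

lemma word_orbit_nonempty: "B \<noteq> {} \<Longrightarrow> word_orbit F B x n \<noteq> {}"
  by (induction n) (auto simp: word_orbit_Suc)

lemma card_lt_card_union_affine_images:
  fixes L :: "'a::real_inner \<Rightarrow> 'a"
  assumes "inj L" "finite S" "S \<noteq> {}" "c \<noteq> c'"
  shows "card S < card ((\<lambda>y. L y + c) ` S \<union> (\<lambda>y. L y + c') ` S)"
proof -
  let ?T = "(\<lambda>y. L y + c) ` S" and ?T' = "(\<lambda>y. L y + c') ` S"
  have card_T: "card ?T = card S" "card ?T' = card S"
    using assms(1) by (auto intro!: card_image simp: inj_on_def)
  have "(\<lambda>a. a + (c - c')) ` ?T' = ?T"
    by (simp add: image_image algebra_simps)
  moreover have "c - c' \<noteq> 0" using assms(4) by simp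
  ultimately have "?T \<noteq> ?T'"
    using translation_invariant_finite_set_imp_zero[of ?T' "c - c'"] assms(2,3) by auto
  then have "\<not> ?T' \<subseteq> ?T"
    using card_subset_eq[of ?T ?T'] card_T assms(2) by auto
  then have "?T \<subset> ?T \<union> ?T'" by blast
  then show ?thesis
    using psubset_card_mono[of "?T \<union> ?T'" ?T] card_T assms(2) by simp
qed

lemma card_word_orbit_affine_ge:
  fixes L :: "'a::real_inner \<Rightarrow> 'a"
  assumes "inj L" "finite B" "b \<in> B" "b' \<in> B" "c b \<noteq> c b'"
  shows "Suc n \<le> card (word_orbit (\<lambda>b y. L y + c b) B x n)"
proof (induction n)
  case 0
  show ?case by simp
next
  case (Suc n)
  let ?S = "word_orbit (\<lambda>b y. L y + c b) B x n"
  have "finite ?S" using assms(2) by (rule finite_word_orbit)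
  have "?S \<noteq> {}" using assms(3) by (intro word_orbit_nonempty) blast
  with \<open>finite ?S\<close> have "card ?S < card ((\<lambda>y. L y + c b) ` ?S \<union> (\<lambda>y. L y + c b') ` ?S)"
    using card_lt_card_union_affine_images assms(1,5) by blast
  also have "\<dots> \<le> card (word_orbit (\<lambda>b y. L y + c b) B x (Suc n))"
    unfolding word_orbit_Suc using assms(2-4) \<open>finite ?S\<close> by (intro card_mono) auto
  finally show ?case using Suc.IH by simp
qed

lemma invertible_if_not_eigenvalue_0:
  fixes R :: "real^'n^'n"
  assumes "\<not> is_eigenvalue R 0"
  shows "invertible R"
  unfolding invertible_left_inverse matrix_left_invertible_ker
proof safe
  fix v assume "R *v v = 0"
  define w :: "complex^'n" where "w = (\<chi> i. complex_of_real (v $ i))"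
  have "cmat R *v w = (\<chi> i. complex_of_real ((R *v v) $ i))"
    unfolding cmat_def w_def matrix_vector_mult_def by (simp add: vec_eq_iff)
  then have "cmat R *v w = 0 *s w"
    using \<open>R *v v = 0\<close> by (simp add: vec_eq_iff)
  then have "w = 0" using assms unfolding is_eigenvalue_def by blast
  then show "v = 0" unfolding w_def by (simp add: vec_eq_iff)
qed

lemma matrix_inv_left:
  fixes A :: "'a::semiring_1^'n^'n"
  assumes "invertible A"
  shows "matrix_inv A ** A = mat 1"
  using someI_ex[OF assms[unfolded invertible_def]] unfolding matrix_inv_def by blast

theorem lemma6p5:
  fixes R :: "real^'d^'d" and B :: "(real^'d) set" and x :: "real^'d" and n :: nat
  assumes "\<And>c. is_eigenvalue R c \<Longrightarrow> cmod c > 1"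
    and "finite B" and "card B \<ge> 2"
  shows "card {foldl (\<lambda>y b. tau_inv R b y) x \<omega> | \<omega>. length \<omega> = n \<and> set \<omega> \<subseteq> B} \<ge> n \<and>
    card {foldl (\<lambda>y b. tau R b y) x \<omega> | \<omega>. length \<omega> = n \<and> set \<omega> \<subseteq> B} \<ge> n"
proof -
  have "invertible R" using assms(1) invertible_if_not_eigenvalue_0 by fastforce
  then have inj_R: "inj ((*v) R)" by (rule inj_matrix_vector_mult)
  have "R ** matrix_inv R = mat 1"
    using matrix_inv_left[OF \<open>invertible R\<close>] matrix_left_right_inverse by blast
  then have inj_R_inv: "inj ((*v) (matrix_inv R))"
    using matrix_left_invertible_injective by blast
  have "\<not> card B \<le> Suc 0" using assms(3) by simp
  then obtain b b' where "b \<in> B" "b' \<in> B" "b \<noteq> b'"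
    unfolding card_le_Suc0_iff_eq[OF assms(2)] by blast
  have "tau_inv R = (\<lambda>b y. R *v y + - b)"
    by (simp add: fun_eq_iff tau_inv_def)
  then have "Suc n \<le> card (word_orbit (tau_inv R) B x n)"
    using card_word_orbit_affine_ge[OF inj_R assms(2) \<open>b \<in> B\<close> \<open>b' \<in> B\<close>, of uminus]
      \<open>b \<noteq> b'\<close> by simp
  moreover have "tau R = (\<lambda>b y. matrix_inv R *v y + matrix_inv R *v b)"
    by (simp add: fun_eq_iff tau_def matrix_vector_right_distrib)
  then have "Suc n \<le> card (word_orbit (tau R) B x n)"
    using card_word_orbit_affine_ge[OF inj_R_inv assms(2) \<open>b \<in> B\<close> \<open>b' \<in> B\<close>]
      \<open>b \<noteq> b'\<close> inj_R_inv by (simp add: inj_eq)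
  ultimately show ?thesis unfolding word_orbit_def by simp
qed

end
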